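(* Let $k,n$ be positive integers with $n\geq2$ and $k\leq\lfloor n/2\rfloor$, and let $Z=(z_{\ell,r,s})\in\mathbb{C}^{\{1,\dots,k\}\times\{1,\dots,n\}\times\{1,\dots,n\}}$. Define $$\mathrm{gnhaf}(Z)=\frac{(n-2k)!}{n!}\sum_{r}\prod_{\ell=1}^k z_{\ell,r(2\ell-1),r(2\ell)},$$ where the sum runs over all injective maps $r:\{1,\dots,2k\}\to\{1,\dots,n\}$. Then $$|\mathrm{gnhaf}(Z)|\leq\prod_{\ell=1}^k\Big(\frac{1}{n(n-1)}\sum_{(r,s)}\Big|\tfrac12(z_{\ell,r,s}+z_{\ell,s,r})\Big|^2\Big)^{1/2}\leq\prod_{\ell=1}^k\Big(\frac{1}{n(n-1)}\sum_{(r,s)}|z_{\ell,r,s}|^2\Big)^{1/2},$$ where the sums run over ordered pairs $(r,s)$ of distinct elements of $\{1,\dots,n\}$. *)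

theory Defs
  imports "HOL-Analysis.Analysis"
begin

text \<open>Injective maps from {1..m} to {1..n}, represented as functions nat => nat
  that are fixed to 0 outside {1..m} (so that the set is in bijection with the
  actual injective maps).\<close>
definition inj_maps :: "nat \<Rightarrow> nat \<Rightarrow> (nat \<Rightarrow> nat) set" where
  "inj_maps m n = {r. inj_on r {1..m} \<and> r ` {1..m} \<subseteq> {1..n} \<and> (\<forall>i. i \<notin> {1..m} \<longrightarrow> r i = 0)}"

definition gnhaf :: "nat \<Rightarrow> nat \<Rightarrow> (nat \<Rightarrow> nat \<Rightarrow> nat \<Rightarrow> complex) \<Rightarrow> complex" where
  "gnhaf k n Z = (of_nat (fact (n - 2*k)) / of_nat (fact n)) *
     (\<Sum>r\<in>inj_maps (2*k) n. \<Prod>l=1..k. Z l (r (2*l - 1)) (r (2*l)))"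

definition dpairs :: "nat \<Rightarrow> (nat \<times> nat) set" where
  "dpairs n = {(r, s). r \<in> {1..n} \<and> s \<in> {1..n} \<and> r \<noteq> s}"

end

theory Submission
  imports Defs
begin

text \<open>
  The sum defining gnhaf is a mean over the injections r of {1..2k} into {1..n} of a product
  whose l-th factor reads r only on the block {2l-1, 2l}. Swapping the two points of a block
  permutes the injections, so each Z_l may be replaced by its symmetric part.

  The heart of the matter is a Cauchy-Schwarz inequality for sampling without replacement:
  for nonnegative factors F_l reading r on disjoint blocks P_l, the mean of the product of the
  F_l over the injections of the union of the P_l into V is at most the product of the square
  roots of the means of F_l^2 over the injections of P_l into V. It is proved by induction on
  the size of V: fixing v in V and sorting the injections by the point sent to v (if any)
  expresses both sides through means over V - {v}, and after Cauchy-Schwarz inside each block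
  the induction closes by an elementary inequality for products in which one factor is
  replaced. For a block of two points the mean of F_l^2 is the normalized sum over ordered
  pairs. The second inequality is |(a+b)/2|^2 <= (|a|^2 + |b|^2)/2, summed over ordered pairs.
\<close>

section \<open>An inequality for products with one factor replaced\<close>

lemma real_sqrt_prod: "sqrt (\<Prod>l\<in>S. f l) = (\<Prod>l\<in>S. sqrt (f l))"
  by (induction S rule: infinite_finite_induct) (auto simp: real_sqrt_mult)

lemma mixed_products_sq_le_step:
  fixes x y b c C S Pi :: real
  assumes x: "0 \<le> x" and y: "0 \<le> y" and xy: "x + y \<le> 1"
    and IH: "(1 - x) * C\<^sup>2 \<le> Pi" "S\<^sup>2 \<le> x * (Pi - (1 - x) * C\<^sup>2)"
  shows "(1 - (x + y)) * (c * C)\<^sup>2 \<le> (b\<^sup>2 + (1 - y) * c\<^sup>2) * Pi"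
    and "(sqrt y * b * C + c * S)\<^sup>2 \<le> (x + y) * ((b\<^sup>2 + (1 - y) * c\<^sup>2) * Pi - (1 - (x + y)) * (c * C)\<^sup>2)"
proof -
  have "((1 - y) * c\<^sup>2) * ((1 - x) * C\<^sup>2) - (1 - (x + y)) * (c * C)\<^sup>2 = x * y * (c * C)\<^sup>2"
    by (simp add: algebra_simps power2_eq_square)
  then have "(1 - (x + y)) * (c * C)\<^sup>2 \<le> ((1 - y) * c\<^sup>2) * ((1 - x) * C\<^sup>2)"
    using mult_nonneg_nonneg[OF mult_nonneg_nonneg[OF x y] zero_le_power2[of "c * C"]] by linarith
  also have "\<dots> \<le> (b\<^sup>2 + (1 - y) * c\<^sup>2) * Pi"
    using IH xy x y by (intro mult_mono) auto
  finally show "(1 - (x + y)) * (c * C)\<^sup>2 \<le> (b\<^sup>2 + (1 - y) * c\<^sup>2) * Pi" .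
  define s t D where "s = sqrt x" and "t = sqrt y" and "D = Pi - (1 - x) * C\<^sup>2"
  obtain B where B: "S = s * B" "B\<^sup>2 \<le> D"
  proof (cases "x = 0")
    case True
    then show ?thesis using IH that[of 0] by (simp add: D_def)
  next
    case False
    then have "S = s * (S / s)" and "(S / s)\<^sup>2 \<le> D"
      using IH x by (simp_all add: s_def D_def power_divide divide_le_eq mult.commute)
    then show ?thesis using that by blast
  qed
  have st: "x = s\<^sup>2" "y = t\<^sup>2"
    using x y by (simp_all add: s_def t_def)
  \<comment> \<open>The defect is an explicit sum of two squares with nonnegative weights.\<close>
  have "(x + y) * ((b\<^sup>2 + (1 - y) * c\<^sup>2) * (B\<^sup>2 + (1 - x) * C\<^sup>2) - (1 - (x + y)) * (c * C)\<^sup>2)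
      - (t * b * C + c * S)\<^sup>2
      = (1 - x - y) * (t * B * c - s * b * C)\<^sup>2 + (x + y) * (s * t * C * c - B * b)\<^sup>2"
    unfolding st B(1) by (simp add: algebra_simps power2_eq_square)
  moreover have "0 \<le> (1 - x - y) * (t * B * c - s * b * C)\<^sup>2 + (x + y) * (s * t * C * c - B * b)\<^sup>2"
    using x y xy by simp
  moreover have "B\<^sup>2 + (1 - x) * C\<^sup>2 \<le> Pi"
    using B(2) by (simp add: D_def)
  then have "(x + y) * ((b\<^sup>2 + (1 - y) * c\<^sup>2) * (B\<^sup>2 + (1 - x) * C\<^sup>2) - (1 - (x + y)) * (c * C)\<^sup>2)
      \<le> (x + y) * ((b\<^sup>2 + (1 - y) * c\<^sup>2) * Pi - (1 - (x + y)) * (c * C)\<^sup>2)"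
    using x y xy by (intro mult_left_mono diff_right_mono mult_left_mono) auto
  ultimately show "(sqrt y * b * C + c * S)\<^sup>2
      \<le> (x + y) * ((b\<^sup>2 + (1 - y) * c\<^sup>2) * Pi - (1 - (x + y)) * (c * C)\<^sup>2)"
    unfolding t_def[symmetric] by linarith
qed

lemma mixed_products_sq_le:
  fixes w b c :: "'i \<Rightarrow> real"
  assumes "finite J" "sum w J \<le> 1" and "\<And>l. l \<in> J \<Longrightarrow> 0 \<le> w l"
  shows "(1 - sum w J) * (\<Prod>l\<in>J. c l)\<^sup>2 \<le> (\<Prod>l\<in>J. (b l)\<^sup>2 + (1 - w l) * (c l)\<^sup>2)
    \<and> (\<Sum>l\<in>J. sqrt (w l) * b l * (\<Prod>l'\<in>J-{l}. c l'))\<^sup>2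
       \<le> sum w J * ((\<Prod>l\<in>J. (b l)\<^sup>2 + (1 - w l) * (c l)\<^sup>2) - (1 - sum w J) * (\<Prod>l\<in>J. c l)\<^sup>2)"
  using assms
proof (induction J rule: finite_induct)
  case empty
  then show ?case by simp
next
  case (insert j J)
  define x C S Pi where "x = sum w J" and "C = (\<Prod>l\<in>J. c l)"
    and "S = (\<Sum>l\<in>J. sqrt (w l) * b l * (\<Prod>l'\<in>J-{l}. c l'))"
    and "Pi = (\<Prod>l\<in>J. (b l)\<^sup>2 + (1 - w l) * (c l)\<^sup>2)"
  have x: "0 \<le> x" and y: "0 \<le> w j" and xy: "x + w j \<le> 1"
    using insert by (auto simp: x_def sum_nonneg)
  have "sum w J \<le> 1"
    using xy y by (simp add: x_def)
  then have IH: "(1 - x) * C\<^sup>2 \<le> Pi" "S\<^sup>2 \<le> x * (Pi - (1 - x) * C\<^sup>2)"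
    using insert.IH insert.prems by (simp_all add: x_def C_def S_def Pi_def)
  have "(\<Prod>l'\<in>insert j J-{l}. c l') = c j * (\<Prod>l'\<in>J-{l}. c l')" if "l \<in> J" for l
  proof -
    have "insert j J - {l} = insert j (J - {l})" using insert(2) that by auto
    then show ?thesis using insert(1,2) by simp
  qed
  then have S_insert: "(\<Sum>l\<in>insert j J. sqrt (w l) * b l * (\<Prod>l'\<in>insert j J-{l}. c l'))
      = sqrt (w j) * b j * C + c j * S"
    using insert by (simp add: C_def S_def sum_distrib_left mult_ac)
  show ?case
    unfolding S_insert using mixed_products_sq_le_step[OF x y xy IH, where b = "b j" and c = "c j"] insert(1,2)
    by (simp add: x_def C_def Pi_def add.commute mult_ac)
qed

lemma mixed_products_le_prod_sqrt:
  fixes w b c :: "'i \<Rightarrow> real"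
  assumes "finite J" "sum w J \<le> 1" and "\<And>l. l \<in> J \<Longrightarrow> 0 \<le> w l"
  shows "(1 - sum w J) * (\<Prod>l\<in>J. c l) + (\<Sum>l\<in>J. sqrt (w l) * b l * (\<Prod>l'\<in>J-{l}. c l'))
     \<le> (\<Prod>l\<in>J. sqrt ((b l)\<^sup>2 + (1 - w l) * (c l)\<^sup>2))"
proof -
  define q C S Pi where "q = sum w J" and "C = (\<Prod>l\<in>J. c l)"
    and "S = (\<Sum>l\<in>J. sqrt (w l) * b l * (\<Prod>l'\<in>J-{l}. c l'))"
    and "Pi = (\<Prod>l\<in>J. (b l)\<^sup>2 + (1 - w l) * (c l)\<^sup>2)"
  have q: "0 \<le> q" "q \<le> 1"
    using assms by (auto simp: q_def sum_nonneg)
  have bound: "(1 - q) * C\<^sup>2 \<le> Pi" "S\<^sup>2 \<le> q * (Pi - (1 - q) * C\<^sup>2)"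
    using mixed_products_sq_le[OF assms] by (simp_all add: q_def C_def S_def Pi_def)
  have "((1 - q) * C + S)\<^sup>2 \<le> Pi"
  proof (cases "q = 0")
    case True
    then show ?thesis using bound by simp
  next
    case False
    have "q * (Pi - ((1 - q) * C + S)\<^sup>2) = (1 - q) * (q * C - S)\<^sup>2 + (q * (Pi - (1 - q) * C\<^sup>2) - S\<^sup>2)"
      by (simp add: algebra_simps power2_eq_square)
    also have "\<dots> \<ge> 0"
      using bound q by simp
    finally show ?thesis
      using False q by (simp add: zero_le_mult_iff)
  qed
  then have "(1 - q) * C + S \<le> sqrt Pi"
    by (rule real_le_rsqrt)
  then show ?thesis
    by (simp add: q_def C_def S_def Pi_def real_sqrt_prod)
qed

lemma sum_sqrt_le_sqrt_card_mult_sum: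
  fixes M :: "'a \<Rightarrow> real"
  assumes "\<And>p. p \<in> A \<Longrightarrow> 0 \<le> M p"
  shows "(\<Sum>p\<in>A. sqrt (M p)) \<le> sqrt (real (card A) * (\<Sum>p\<in>A. M p))"
proof (rule real_le_rsqrt)
  have "(\<Sum>p\<in>A. sqrt (M p) * 1)\<^sup>2 \<le> (\<Sum>p\<in>A. (sqrt (M p))\<^sup>2) * (\<Sum>p\<in>A. 1\<^sup>2)"
    by (rule Cauchy_Schwarz_ineq_sum)
  then show "(\<Sum>p\<in>A. sqrt (M p))\<^sup>2 \<le> real (card A) * (\<Sum>p\<in>A. M p)"
    using assms by (simp add: mult.commute)
qed

lemma pinned_sum_le_prod_sqrt:
  fixes M :: "'i \<Rightarrow> 'a \<Rightarrow> real" and K N :: "'i \<Rightarrow> real" and n :: nat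
  assumes "finite S" "0 < n" "(\<Sum>l\<in>S. card (P l)) \<le> n"
    and "\<And>l p. l \<in> S \<Longrightarrow> p \<in> P l \<Longrightarrow> 0 \<le> M l p" "\<And>l. l \<in> S \<Longrightarrow> 0 \<le> K l"
    and N: "\<And>l. l \<in> S \<Longrightarrow> real n * N l = (\<Sum>p\<in>P l. M l p) + real (n - card (P l)) * K l"
  shows "(\<Sum>l\<in>S. \<Sum>p\<in>P l. sqrt (M l p) * (\<Prod>l'\<in>S-{l}. sqrt (K l')))
      + real (n - (\<Sum>l\<in>S. card (P l))) * (\<Prod>l\<in>S. sqrt (K l))
    \<le> real n * (\<Prod>l\<in>S. sqrt (N l))"
proof -
  define w b c where "w l = real (card (P l)) / n" and "b l = sqrt ((\<Sum>p\<in>P l. M l p) / n)"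
    and "c l = sqrt (K l)" for l
  have card_le: "card (P l) \<le> n" if "l \<in> S" for l
    using member_le_sum[OF that _ assms(1), of "\<lambda>l. card (P l)"] assms(3) by simp
  have sum_w: "sum w S = real (\<Sum>l\<in>S. card (P l)) / n"
    by (simp add: w_def sum_divide_distrib)
  have sum_w_le: "sum w S \<le> 1"
    unfolding sum_w using assms(2,3) by (simp del: of_nat_sum)
  have "(\<Sum>p\<in>P l. sqrt (M l p)) \<le> n * (sqrt (w l) * b l)" if "l \<in> S" for l
  proof -
    have "sqrt (w l) * b l = sqrt (real (card (P l)) * (\<Sum>p\<in>P l. M l p)) / n"
      using assms(2) by (simp add: w_def b_def real_sqrt_mult real_sqrt_divide)
    then show ?thesis
      using sum_sqrt_le_sqrt_card_mult_sum[of "P l" "M l"] assms(2,4) that by simp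
  qed
  then have "(\<Sum>l\<in>S. \<Sum>p\<in>P l. sqrt (M l p) * (\<Prod>l'\<in>S-{l}. sqrt (K l')))
      + real (n - (\<Sum>l\<in>S. card (P l))) * (\<Prod>l\<in>S. sqrt (K l))
    \<le> (\<Sum>l\<in>S. n * (sqrt (w l) * b l) * (\<Prod>l'\<in>S-{l}. c l'))
      + real (n - (\<Sum>l\<in>S. card (P l))) * (\<Prod>l\<in>S. c l)"
    unfolding sum_distrib_right[symmetric] c_def
    by (intro add_right_mono sum_mono mult_right_mono prod_nonneg) (auto intro: assms(5))
  also have "\<dots> = n * ((1 - sum w S) * (\<Prod>l\<in>S. c l)
      + (\<Sum>l\<in>S. sqrt (w l) * b l * (\<Prod>l'\<in>S-{l}. c l')))"
    using assms(2,3) by (simp add: sum_w of_nat_diff sum_distrib_left field_simps)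
  also have "\<dots> \<le> n * (\<Prod>l\<in>S. sqrt ((b l)\<^sup>2 + (1 - w l) * (c l)\<^sup>2))"
    using assms sum_w_le
    by (intro mult_left_mono mixed_products_le_prod_sqrt) (auto simp: w_def b_def c_def sum_nonneg)
  also have "\<dots> = n * (\<Prod>l\<in>S. sqrt (N l))"
  proof -
    have "(b l)\<^sup>2 + (1 - w l) * (c l)\<^sup>2 = N l" if "l \<in> S" for l
    proof -
      have "0 \<le> (\<Sum>p\<in>P l. M l p)" "0 \<le> K l"
        using assms(4,5) that by (auto intro: sum_nonneg)
      then show ?thesis
        using N[OF that] assms(2) card_le[OF that] by (simp add: w_def b_def c_def of_nat_diff field_simps)
    qed
    then show ?thesis by simp
  qed
  finally show ?thesis .
qed

section \<open>Means over injections\<close>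

definition injs :: "'a set \<Rightarrow> 'b::zero set \<Rightarrow> ('a \<Rightarrow> 'b) set" where
  "injs P V = {r. inj_on r P \<and> r ` P \<subseteq> V \<and> (\<forall>i. i \<notin> P \<longrightarrow> r i = 0)}"

text \<open>The mean is 0 when there is no injection, because x / 0 = 0.\<close>

definition inj_mean :: "'a set \<Rightarrow> 'b::zero set \<Rightarrow> (('a \<Rightarrow> 'b) \<Rightarrow> 'c::field) \<Rightarrow> 'c" where
  "inj_mean P V f = (\<Sum>r\<in>injs P V. f r) / of_nat (card (injs P V))"

lemma finite_injs: "finite P \<Longrightarrow> finite V \<Longrightarrow> finite (injs P V)"
  by (rule finite_subset[OF _ finite_set_of_finite_funs[of P V 0]]) (auto simp: injs_def)

lemma injs_empty: "injs {} V = {\<lambda>_. 0}"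
  by (auto simp: injs_def)

lemma card_injs:
  assumes "finite P" "finite V"
  shows "card (injs P V) = (\<Prod>i<card P. card V - i)"
proof -
  have "bij_betw (\<lambda>r. restrict r P) (injs P V) {f \<in> P \<rightarrow>\<^sub>E V. inj_on f P}"
    by (rule bij_betwI[where g = "\<lambda>f i. if i \<in> P then f i else 0"])
      (auto simp: injs_def inj_on_def PiE_def extensional_def)
  then have "card (injs P V) = card {f \<in> P \<rightarrow>\<^sub>E V. inj_on f P}"
    by (rule bij_betw_same_card)
  also have "\<dots> = (\<Prod>i<card P. card V - i)"
    using card_inj_on_subset_funcset[OF assms order_refl] by (simp add: atLeast0LessThan)
  finally show ?thesis .
qed

lemma card_injs_remove:
  assumes "finite P" "finite V" "p \<in> P" "v \<in> V"
  shows "card (injs P V) = card V * card (injs (P - {p}) (V - {v}))"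
proof -
  obtain m n where "card P = Suc m" "card (P - {p}) = m" "card V = Suc n" "card (V - {v}) = n"
    using assms by (metis card_Suc_Diff1)
  with assms show ?thesis
    by (simp add: card_injs prod.lessThan_Suc_shift del: prod.lessThan_Suc)
qed

lemma card_injs_avoid:
  assumes "finite P" "finite V" "p \<in> P" "v \<in> V"
  shows "card (injs P (V - {v})) = (card V - card P) * card (injs (P - {p}) (V - {v}))"
proof -
  obtain m n where "card P = Suc m" "card (P - {p}) = m" "card V = Suc n" "card (V - {v}) = n"
    using assms by (metis card_Suc_Diff1)
  with assms show ?thesis
    by (simp add: card_injs)
qed

lemma prod_lessThan_diff_mult_fact:
  fixes m n :: nat
  assumes "m \<le> n"
  shows "(\<Prod>i<m. n - i) * fact (n - m) = fact n"
  using assms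
proof (induction m)
  case (Suc m)
  have "n - m = Suc (n - Suc m)"
    using Suc.prems by simp
  then have "(n - m) * fact (n - Suc m) = fact (n - m)"
    by (metis fact_Suc of_nat_id)
  then have "(\<Prod>i<Suc m. n - i) * fact (n - Suc m) = (\<Prod>i<m. n - i) * fact (n - m)"
    by (simp add: mult.assoc)
  with Suc show ?case by simp
qed simp

lemma card_injs_mult_fact:
  assumes "finite P" "finite V" "card P \<le> card V"
  shows "card (injs P V) * fact (card V - card P) = fact (card V)"
  using assms by (simp add: card_injs prod_lessThan_diff_mult_fact)

lemma fun_upd_in_injs:
  assumes "r \<in> injs (P - {p}) (V - {v})" "p \<in> P" "v \<in> V"
  shows "r(p := v) \<in> injs P V"
  using assms unfolding injs_def inj_on_def by (auto split: if_splits)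

lemma fun_upd_zero_in_injs:
  assumes "r \<in> injs P V" "p \<in> P"
  shows "r(p := 0) \<in> injs (P - {p}) (V - {r p})"
  using assms unfolding injs_def inj_on_def by (auto split: if_splits)

lemma sum_injs_split:
  fixes g :: "('a \<Rightarrow> 'b::zero) \<Rightarrow> 'c::comm_monoid_add"
  assumes "finite P" "finite V" "v \<in> V"
  shows "(\<Sum>r\<in>injs P V. g r)
    = (\<Sum>p\<in>P. \<Sum>r\<in>injs (P - {p}) (V - {v}). g (r(p := v))) + (\<Sum>r\<in>injs P (V - {v}). g r)"
proof -
  define A where "A p = (\<lambda>r. r(p := v)) ` injs (P - {p}) (V - {v})" for p
  have A: "A p = {r \<in> injs P V. r p = v}" if "p \<in> P" for p
  proof
    show "A p \<subseteq> {r \<in> injs P V. r p = v}"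
      using fun_upd_in_injs[OF _ that assms(3)] by (auto simp: A_def)
    show "{r \<in> injs P V. r p = v} \<subseteq> A p"
    proof clarify
      fix r assume r: "r \<in> injs P V" "v = r p"
      then have "r = (r(p := 0))(p := v)" by simp
      with fun_upd_zero_in_injs[OF r(1) that] show "r \<in> A p"
        unfolding A_def r(2) by blast
    qed
  qed
  have split: "injs P V = (\<Union>p\<in>P. A p) \<union> injs P (V - {v})"
    using A by (auto simp: injs_def)
  have disjoint: "(\<Union>p\<in>P. A p) \<inter> injs P (V - {v}) = {}"
    using A by (auto simp: injs_def)
  have disjoint_family: "disjoint_family_on A P"
    using A by (auto simp: disjoint_family_on_def injs_def inj_on_def)
  have inj: "inj_on (\<lambda>r. r(p := v)) (injs (P - {p}) (V - {v}))" for p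
  proof (rule inj_onI)
    fix r r' assume r: "r \<in> injs (P - {p}) (V - {v})" "r' \<in> injs (P - {p}) (V - {v})"
      and eq: "r(p := v) = r'(p := v)"
    have "r p = 0" "r' p = 0" using r by (auto simp: injs_def)
    then show "r = r'" using eq by (metis fun_upd_triv fun_upd_upd)
  qed
  have finite_A: "finite (A p)" for p
    using assms by (simp add: A_def finite_injs)
  have "(\<Sum>r\<in>injs P V. g r) = (\<Sum>r\<in>(\<Union>p\<in>P. A p). g r) + (\<Sum>r\<in>injs P (V - {v}). g r)"
    unfolding split using assms finite_A disjoint by (intro sum.union_disjoint) (auto simp: finite_injs)
  also have "(\<Sum>r\<in>(\<Union>p\<in>P. A p). g r) = (\<Sum>p\<in>P. \<Sum>r\<in>A p. g r)"
    using assms(1) finite_A disjoint_family by (simp add: sum.UNION_disjoint_family)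
  also have "\<dots> = (\<Sum>p\<in>P. \<Sum>r\<in>injs (P - {p}) (V - {v}). g (r(p := v)))"
    by (simp add: A_def sum.reindex[OF inj])
  finally show ?thesis .
qed

lemma sum_injs_eq_card_mult_inj_mean:
  fixes f :: "('a \<Rightarrow> 'b::zero) \<Rightarrow> 'c::field_char_0"
  assumes "finite P" "finite V"
  shows "(\<Sum>r\<in>injs P V. f r) = of_nat (card (injs P V)) * inj_mean P V f"
  using assms by (cases "card (injs P V) = 0") (auto simp: inj_mean_def finite_injs)

lemma inj_mean_empty: "inj_mean {} V f = f (\<lambda>_. 0)"
  by (simp add: inj_mean_def injs_empty)

lemma inj_mean_eq_0_if_card_less:
  assumes "finite P" "finite V" "card V < card P"
  shows "inj_mean P V f = 0"
proof -
  have "card (injs P V) = 0"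
    using assms by (auto simp: card_injs intro!: bexI[of _ "card V"])
  then show ?thesis by (simp add: inj_mean_def)
qed

lemma inj_mean_nonneg:
  fixes f :: "('a \<Rightarrow> 'b::zero) \<Rightarrow> 'c::linordered_field"
  shows "(\<And>r. 0 \<le> f r) \<Longrightarrow> 0 \<le> inj_mean P V f"
  unfolding inj_mean_def by (intro divide_nonneg_nonneg sum_nonneg) auto

lemma norm_inj_mean_le:
  fixes f :: "('a \<Rightarrow> 'b::zero) \<Rightarrow> 'c::real_normed_field"
  shows "norm (inj_mean P V f) \<le> inj_mean P V (\<lambda>r. norm (f r))"
  unfolding inj_mean_def norm_divide norm_of_nat by (intro divide_right_mono norm_sum) simp

text \<open>A uniform injection sends a given point of P to v with probability 1/|V| and
  avoids v with probability (|V| - |P|)/|V|.\<close>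

lemma inj_mean_split:
  fixes f :: "('a \<Rightarrow> 'b::zero) \<Rightarrow> 'c::field_char_0"
  assumes "finite P" "finite V" "v \<in> V"
  shows "of_nat (card V) * inj_mean P V f
    = (\<Sum>p\<in>P. inj_mean (P - {p}) (V - {v}) (\<lambda>r. f (r(p := v))))
      + of_nat (card V - card P) * inj_mean P (V - {v}) f"
    (is "_ = ?rhs")
proof (cases "P = {}")
  case True
  then show ?thesis by (simp add: inj_mean_def injs_empty)
next
  case False
  then obtain p0 where p0: "p0 \<in> P" by blast
  define c where "c = card (injs (P - {p0}) (V - {v}))"
  have c: "card (injs (P - {p}) (V - {v})) = c" if "p \<in> P" for p
    using assms that p0 by (simp add: c_def card_injs)
  have card_V: "card (injs P V) = card V * c"
    using card_injs_remove[OF assms(1,2) p0 assms(3)] by (simp add: c_def)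
  have card_V_v: "card (injs P (V - {v})) = (card V - card P) * c"
    using card_injs_avoid[OF assms(1,2) p0 assms(3)] by (simp add: c_def)
  show ?thesis
  proof (cases "c = 0")
    case True
    then show ?thesis
      by (simp add: inj_mean_def c card_V card_V_v)
  next
    case False
    have "of_nat c * (of_nat (card V) * inj_mean P V f) = (\<Sum>r\<in>injs P V. f r)"
      using assms by (simp add: sum_injs_eq_card_mult_inj_mean card_V)
    also have "\<dots> = (\<Sum>p\<in>P. of_nat c * inj_mean (P - {p}) (V - {v}) (\<lambda>r. f (r(p := v))))
        + of_nat c * (of_nat (card V - card P) * inj_mean P (V - {v}) f)"
      using assms by (simp add: sum_injs_split sum_injs_eq_card_mult_inj_mean c card_V_v)
    also have "\<dots> = of_nat c * ?rhs"
      by (simp add: sum_distrib_left distrib_left)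
    finally show ?thesis
      using False by simp
  qed
qed

section \<open>Cauchy-Schwarz for products over disjoint blocks\<close>

definition block_factors :: "'i set \<Rightarrow> ('i \<Rightarrow> 'a set) \<Rightarrow> ('i \<Rightarrow> ('a \<Rightarrow> 'b) \<Rightarrow> real) \<Rightarrow> bool" where
  "block_factors S P F \<longleftrightarrow> finite S \<and> (\<forall>l\<in>S. finite (P l)) \<and> disjoint_family_on P S
     \<and> (\<forall>l\<in>S. \<forall>r. 0 \<le> F l r) \<and> (\<forall>l\<in>S. \<forall>r r'. (\<forall>x\<in>P l. r x = r' x) \<longrightarrow> F l r = F l r')"

lemma block_factors_pin:
  assumes "block_factors S P F" "l \<in> S" "p \<in> P l"
  shows "block_factors S (P(l := P l - {p})) (F(l := \<lambda>r. F l (r(p := v))))"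
  using assms unfolding block_factors_def disjoint_family_on_def
  by (auto split: if_splits)

lemma UN_blocks_pin:
  assumes "block_factors S P F" "l \<in> S" "p \<in> P l"
  shows "(\<Union>l'\<in>S. (P(l := P l - {p})) l') = (\<Union>l'\<in>S. P l') - {p}"
  using assms unfolding block_factors_def disjoint_family_on_def by auto

lemma prod_factors_pin:
  assumes "block_factors S P F" "l \<in> S" "p \<in> P l"
  shows "(\<Prod>l'\<in>S. (F(l := \<lambda>r. F l (r(p := v)))) l' r) = (\<Prod>l'\<in>S. F l' (r(p := v)))"
proof (rule prod.cong[OF refl])
  fix l' assume "l' \<in> S"
  moreover have "p \<notin> P l'" if "l' \<in> S" "l' \<noteq> l"
    using assms that unfolding block_factors_def disjoint_family_on_def by blast
  ultimately show "(F(l := \<lambda>r. F l (r(p := v)))) l' r = F l' (r(p := v))"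
    using assms(1) unfolding block_factors_def by (cases "l' = l") auto
qed

lemma inj_mean_pinned_le:
  fixes F :: "'i \<Rightarrow> ('a \<Rightarrow> 'b::zero) \<Rightarrow> real"
  assumes F: "block_factors S P F" "l \<in> S" "p \<in> P l"
    and IH: "\<And>(P :: 'i \<Rightarrow> 'a set) (F :: 'i \<Rightarrow> ('a \<Rightarrow> 'b) \<Rightarrow> real). block_factors S P F \<Longrightarrow>
      inj_mean (\<Union>l\<in>S. P l) W (\<lambda>r. \<Prod>l\<in>S. F l r) \<le> (\<Prod>l\<in>S. sqrt (inj_mean (P l) W (\<lambda>r. (F l r)\<^sup>2)))"
  shows "inj_mean ((\<Union>l\<in>S. P l) - {p}) W (\<lambda>r. \<Prod>l'\<in>S. F l' (r(p := v)))
    \<le> sqrt (inj_mean (P l - {p}) W (\<lambda>r. (F l (r(p := v)))\<^sup>2))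
      * (\<Prod>l'\<in>S-{l}. sqrt (inj_mean (P l') W (\<lambda>r. (F l' r)\<^sup>2)))"
proof -
  define P' F' where "P' = P(l := P l - {p})" and "F' = F(l := \<lambda>r. F l (r(p := v)))"
  have "block_factors S P' F'"
    unfolding P'_def F'_def by (rule block_factors_pin[OF F])
  have "inj_mean ((\<Union>l\<in>S. P l) - {p}) W (\<lambda>r. \<Prod>l'\<in>S. F l' (r(p := v)))
      = inj_mean (\<Union>l\<in>S. P' l) W (\<lambda>r. \<Prod>l\<in>S. F' l r)"
    unfolding P'_def F'_def UN_blocks_pin[OF F] prod_factors_pin[OF F] ..
  also have "\<dots> \<le> (\<Prod>l\<in>S. sqrt (inj_mean (P' l) W (\<lambda>r. (F' l r)\<^sup>2)))"
    using \<open>block_factors S P' F'\<close> by (rule IH)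
  also have "\<dots> = sqrt (inj_mean (P l - {p}) W (\<lambda>r. (F l (r(p := v)))\<^sup>2))
        * (\<Prod>l'\<in>S-{l}. sqrt (inj_mean (P l') W (\<lambda>r. (F l' r)\<^sup>2)))"
    using F(1,2) by (simp add: prod.remove block_factors_def P'_def F'_def)
  finally show ?thesis .
qed

lemma inj_mean_prod_le_step:
  fixes F :: "'i \<Rightarrow> ('a \<Rightarrow> 'b::zero) \<Rightarrow> real"
  assumes F: "block_factors S P F" and V: "finite V" "v \<in> V"
    and IH: "\<And>(P :: 'i \<Rightarrow> 'a set) (F :: 'i \<Rightarrow> ('a \<Rightarrow> 'b) \<Rightarrow> real). block_factors S P F \<Longrightarrow>
      inj_mean (\<Union>l\<in>S. P l) (V - {v}) (\<lambda>r. \<Prod>l\<in>S. F l r)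
        \<le> (\<Prod>l\<in>S. sqrt (inj_mean (P l) (V - {v}) (\<lambda>r. (F l r)\<^sup>2)))"
  shows "inj_mean (\<Union>l\<in>S. P l) V (\<lambda>r. \<Prod>l\<in>S. F l r) \<le> (\<Prod>l\<in>S. sqrt (inj_mean (P l) V (\<lambda>r. (F l r)\<^sup>2)))"
proof -
  define U where "U = (\<Union>l\<in>S. P l)"
  define K M N
    where "K l = inj_mean (P l) (V - {v}) (\<lambda>r. (F l r)\<^sup>2)"
      and "M l p = inj_mean (P l - {p}) (V - {v}) (\<lambda>r. (F l (r(p := v)))\<^sup>2)"
      and "N l = inj_mean (P l) V (\<lambda>r. (F l r)\<^sup>2)" for l p
  have fin: "finite S" "\<And>l. l \<in> S \<Longrightarrow> finite (P l)" and disj: "disjoint_family_on P S"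
    using F by (auto simp: block_factors_def)
  have "finite U" using fin by (simp add: U_def)
  have card_U: "card U = (\<Sum>l\<in>S. card (P l))"
    using fin disj by (simp add: U_def card_UN_disjoint disjoint_family_on_def)
  have RHS_nonneg: "0 \<le> (\<Prod>l\<in>S. sqrt (N l))"
    by (auto simp: N_def intro!: prod_nonneg inj_mean_nonneg)
  show ?thesis
  proof (cases "card U \<le> card V")
    case False
    then show ?thesis
      using V \<open>finite U\<close> RHS_nonneg by (simp add: inj_mean_eq_0_if_card_less U_def N_def)
  next
    case True
    have n: "0 < card V" using V by (auto simp: card_gt_0_iff)
    have "real (card V) * inj_mean U V (\<lambda>r. \<Prod>l\<in>S. F l r)
        = (\<Sum>l\<in>S. \<Sum>p\<in>P l. inj_mean (U - {p}) (V - {v}) (\<lambda>r. \<Prod>l'\<in>S. F l' (r(p := v))))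
          + real (card V - card U) * inj_mean U (V - {v}) (\<lambda>r. \<Prod>l\<in>S. F l r)"
      using inj_mean_split[OF \<open>finite U\<close> V] fin disj
      by (simp add: U_def sum.UNION_disjoint_family)
    also have "\<dots> \<le> (\<Sum>l\<in>S. \<Sum>p\<in>P l. sqrt (M l p) * (\<Prod>l'\<in>S-{l}. sqrt (K l')))
          + real (card V - (\<Sum>l\<in>S. card (P l))) * (\<Prod>l\<in>S. sqrt (K l))"
      unfolding card_U[symmetric] M_def K_def U_def
      by (intro add_mono sum_mono mult_left_mono inj_mean_pinned_le[OF F] IH F) auto
    also have "\<dots> \<le> real (card V) * (\<Prod>l\<in>S. sqrt (N l))"
    proof (rule pinned_sum_le_prod_sqrt[OF fin(1) n])
      show "(\<Sum>l\<in>S. card (P l)) \<le> card V" using True card_U by simp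
      show "real (card V) * N l = (\<Sum>p\<in>P l. M l p) + real (card V - card (P l)) * K l" if "l \<in> S" for l
        using inj_mean_split[OF fin(2)[OF that] V] by (simp add: N_def M_def K_def)
    qed (auto simp: M_def K_def inj_mean_nonneg)
    finally show ?thesis
      using n by (simp add: U_def N_def mult_le_cancel_left_pos)
  qed
qed

lemma inj_mean_prod_le_prod_sqrt:
  fixes F :: "'i \<Rightarrow> ('a \<Rightarrow> 'b::zero) \<Rightarrow> real"
  assumes "block_factors S P F" "finite V"
  shows "inj_mean (\<Union>l\<in>S. P l) V (\<lambda>r. \<Prod>l\<in>S. F l r) \<le> (\<Prod>l\<in>S. sqrt (inj_mean (P l) V (\<lambda>r. (F l r)\<^sup>2)))"
  using assms
proof (induction "card V" arbitrary: V P F)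
  case 0
  then have "V = {}" by simp
  have fin: "finite S" "\<And>l. l \<in> S \<Longrightarrow> finite (P l)" and nonneg: "\<And>l r. l \<in> S \<Longrightarrow> 0 \<le> F l r"
    using "0.prems"(1) by (auto simp: block_factors_def)
  show ?case
  proof (cases "\<forall>l\<in>S. P l = {}")
    case True
    then show ?thesis
      using nonneg by (simp add: inj_mean_empty)
  next
    case False
    then have "card V < card (\<Union>l\<in>S. P l)"
      using fin \<open>V = {}\<close> by (auto simp: card_gt_0_iff)
    then have "inj_mean (\<Union>l\<in>S. P l) V (\<lambda>r. \<Prod>l\<in>S. F l r) = 0"
      using fin "0.prems"(2) by (intro inj_mean_eq_0_if_card_less) auto
    then show ?thesis
      by (auto intro!: prod_nonneg inj_mean_nonneg)
  qed
next
  case (Suc m)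
  then obtain v where v: "v \<in> V" by (metis card_eq_SucD insertI1)
  with Suc.hyps(2) have "m = card (V - {v})" by simp
  show ?case
    using Suc.prems v Suc.hyps(1)[OF \<open>m = card (V - {v})\<close>] by (rule inj_mean_prod_le_step) (use Suc.prems(2) in auto)
qed

section \<open>Symmetrizing the factors\<close>

definition symmetrize :: "('a \<Rightarrow> 'a \<Rightarrow> 'c::field) \<Rightarrow> 'a \<Rightarrow> 'a \<Rightarrow> 'c" where
  "symmetrize f a b = (f a b + f b a) / 2"

lemma sum_mult_involution_average:
  fixes f g :: "'a \<Rightarrow> 'c::field_char_0"
  assumes "\<And>x. x \<in> A \<Longrightarrow> \<sigma> x \<in> A" "\<And>x. x \<in> A \<Longrightarrow> \<sigma> (\<sigma> x) = x"
    and "\<And>x. x \<in> A \<Longrightarrow> g (\<sigma> x) = g x"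
  shows "(\<Sum>x\<in>A. (f x + f (\<sigma> x)) / 2 * g x) = (\<Sum>x\<in>A. f x * g x)"
proof -
  have "(\<Sum>x\<in>A. f (\<sigma> x) * g x) = (\<Sum>x\<in>A. f x * g x)"
    by (rule sum.reindex_bij_witness[of _ \<sigma> \<sigma>]) (auto simp: assms)
  then show ?thesis
    by (simp add: add_divide_distrib distrib_right sum.distrib flip: sum_divide_distrib)
qed

lemma comp_transpose_in_injs:
  assumes "r \<in> injs P V" "a \<in> P" "b \<in> P"
  shows "r \<circ> Transposition.transpose a b \<in> injs P V"
proof -
  have r: "inj_on r P" "r ` P \<subseteq> V" "\<And>i. i \<notin> P \<Longrightarrow> r i = 0"
    using assms(1) by (auto simp: injs_def)
  have image: "Transposition.transpose a b ` P = P"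
    using assms(2,3) by simp
  then have "inj_on (r \<circ> Transposition.transpose a b) P"
    using comp_inj_on[of "Transposition.transpose a b" P r] r(1) by simp
  moreover have "(r \<circ> Transposition.transpose a b) ` P \<subseteq> V"
    using image r(2) by (metis image_comp)
  moreover have "Transposition.transpose a b i = i" if "i \<notin> P" for i
    using assms(2,3) that by (metis transpose_apply_other)
  ultimately show ?thesis
    using r(3) by (simp add: injs_def)
qed

lemma sum_injs_prod_symmetrize_one:
  fixes Q :: "nat \<Rightarrow> 'b::zero \<Rightarrow> 'b \<Rightarrow> 'c::field_char_0"
  assumes j: "j \<in> {1..k}"
  shows "(\<Sum>r\<in>injs {1..2*k} V. \<Prod>l=1..k. (Q(j := symmetrize (Q j))) l (r (2*l-1)) (r (2*l)))
       = (\<Sum>r\<in>injs {1..2*k} V. \<Prod>l=1..k. Q l (r (2*l-1)) (r (2*l)))"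
proof -
  define \<sigma> where "\<sigma> r = r \<circ> Transposition.transpose (2*j-1) (2*j)" for r :: "nat \<Rightarrow> 'b"
  define f where "f r = Q j (r (2*j-1)) (r (2*j))" for r
  define g where "g r = (\<Prod>l\<in>{1..k}-{j}. Q l (r (2*l-1)) (r (2*l)))" for r
  have split: "(\<Prod>l=1..k. R l (r (2*l-1)) (r (2*l))) = R j (r (2*j-1)) (r (2*j))
      * (\<Prod>l\<in>{1..k}-{j}. R l (r (2*l-1)) (r (2*l)))" for R :: "nat \<Rightarrow> 'b \<Rightarrow> 'b \<Rightarrow> 'c" and r
    using j by (simp add: prod.remove)
  have symmetrized: "(\<Prod>l=1..k. (Q(j := symmetrize (Q j))) l (r (2*l-1)) (r (2*l))) = (f r + f (\<sigma> r)) / 2 * g r" for r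
  proof -
    have "(\<Prod>l\<in>{1..k}-{j}. (Q(j := symmetrize (Q j))) l (r (2*l-1)) (r (2*l))) = g r"
      unfolding g_def by (rule prod.cong) auto
    then show ?thesis
      unfolding split[of "Q(j := symmetrize (Q j))"] by (simp add: f_def \<sigma>_def symmetrize_def)
  qed
  have original: "(\<Prod>l=1..k. Q l (r (2*l-1)) (r (2*l))) = f r * g r" for r
    unfolding split[of Q] by (simp add: f_def g_def)
  have "(\<Sum>r\<in>injs {1..2*k} V. (f r + f (\<sigma> r)) / 2 * g r) = (\<Sum>r\<in>injs {1..2*k} V. f r * g r)"
  proof (rule sum_mult_involution_average)
    show "\<sigma> r \<in> injs {1..2*k} V" if "r \<in> injs {1..2*k} V" for r
      unfolding \<sigma>_def using j that by (intro comp_transpose_in_injs) auto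
    show "\<sigma> (\<sigma> r) = r" for r
      by (simp add: \<sigma>_def comp_assoc)
    show "g (\<sigma> r) = g r" for r
      unfolding g_def \<sigma>_def using j by (intro prod.cong) auto
  qed
  then show ?thesis
    unfolding symmetrized original .
qed

lemma sum_injs_prod_symmetrize:
  fixes Z :: "nat \<Rightarrow> 'b::zero \<Rightarrow> 'b \<Rightarrow> 'c::field_char_0"
  shows "(\<Sum>r\<in>injs {1..2*k} V. \<Prod>l=1..k. symmetrize (Z l) (r (2*l-1)) (r (2*l)))
       = (\<Sum>r\<in>injs {1..2*k} V. \<Prod>l=1..k. Z l (r (2*l-1)) (r (2*l)))"
proof -
  define Q where "Q T l = (if l \<in> T then symmetrize (Z l) else Z l)" for T l
  have "(\<Sum>r\<in>injs {1..2*k} V. \<Prod>l=1..k. Q T l (r (2*l-1)) (r (2*l)))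
      = (\<Sum>r\<in>injs {1..2*k} V. \<Prod>l=1..k. Z l (r (2*l-1)) (r (2*l)))" if "T \<subseteq> {1..k}" for T
    using finite_subset[OF that finite_atLeastAtMost] that
  proof (induction T rule: finite_subset_induct)
    case empty
    then show ?case by (simp add: Q_def)
  next
    case (insert j T)
    then have "Q (insert j T) = (Q T)(j := symmetrize (Q T j))"
      by (auto simp: Q_def)
    then show ?case
      using sum_injs_prod_symmetrize_one[of j k "Q T" V] insert by simp
  qed
  from this[of "{1..k}"] show ?thesis
    by (simp add: Q_def)
qed

section \<open>The generalized normalized hafnian\<close>

lemma inj_maps_eq_injs: "inj_maps m n = injs {1..m} {1..n}"
  by (simp add: inj_maps_def injs_def)

lemma UN_pair_blocks: "(\<Union>l\<in>{1..k}. {2*l-1, 2*l}) = {1..2*k::nat}"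
proof
  show "{1..2*k} \<subseteq> (\<Union>l\<in>{1..k}. {2*l-1, 2*l})"
  proof
    fix x assume "x \<in> {1..2*k}"
    then have "(x + 1) div 2 \<in> {1..k}" "x \<in> {2 * ((x + 1) div 2) - 1, 2 * ((x + 1) div 2)}"
      by auto
    then show "x \<in> (\<Union>l\<in>{1..k}. {2*l-1, 2*l})" by blast
  qed
qed auto

lemma block_factors_pair_blocks:
  fixes G :: "nat \<Rightarrow> 'b \<Rightarrow> 'b \<Rightarrow> real"
  assumes "\<And>l x y. 0 \<le> G l x y"
  shows "block_factors {1..k} (\<lambda>l. {2*l-1, 2*l}) (\<lambda>l r. G l (r (2*l-1)) (r (2*l)))"
  using assms by (auto simp: block_factors_def disjoint_family_on_def)

lemma inj_mean_pair:
  fixes f :: "nat \<Rightarrow> nat \<Rightarrow> real"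
  assumes "a \<noteq> b"
  shows "inj_mean {a, b} {1..n} (\<lambda>\<rho>. f (\<rho> a) (\<rho> b)) = 1 / (real n * (real n - 1)) * (\<Sum>(x, y)\<in>dpairs n. f x y)"
proof -
  have bij: "bij_betw (\<lambda>\<rho>. (\<rho> a, \<rho> b)) (injs {a, b} {1..n}) (dpairs n)"
    by (rule bij_betwI[where g = "\<lambda>(x, y) i. if i = a then x else if i = b then y else 0"])
      (use assms in \<open>auto simp: injs_def dpairs_def inj_on_def\<close>)
  have "card (injs {a, b} {1..n}) = n * (n - 1)"
    using assms by (simp add: card_injs numeral_2_eq_2 lessThan_Suc)
  moreover have "real (n * (n - 1)) = real n * (real n - 1)"
    by (cases n) (auto simp: algebra_simps)
  ultimately show ?thesis
    unfolding inj_mean_def sum.reindex_bij_betw[OF bij, of "\<lambda>(x, y). f x y", symmetric] by simp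
qed

lemma gnhaf_eq_inj_mean_symmetrize:
  assumes "2*k \<le> n"
  shows "gnhaf k n Z = inj_mean {1..2*k} {1..n} (\<lambda>r. \<Prod>l=1..k. symmetrize (Z l) (r (2*l-1)) (r (2*l)))"
proof -
  have "card (injs {1..2*k} {1..n}) * fact (n - 2*k) = (fact n :: nat)"
    using card_injs_mult_fact[of "{1..2*k}" "{1..n}"] assms by simp
  then have "(of_nat (fact (n - 2*k)) / of_nat (fact n) :: complex) = 1 / of_nat (card (injs {1..2*k} {1..n}))"
    by (metis (mono_tags, lifting) fact_nonzero divide_divide_eq_left' divide_self_if
        of_nat_eq_0_iff of_nat_mult)
  then show ?thesis
    unfolding gnhaf_def inj_mean_def inj_maps_eq_injs sum_injs_prod_symmetrize by simp
qed

lemma norm_symmetrize_sq_le: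
  fixes f :: "'a \<Rightarrow> 'a \<Rightarrow> 'c::real_normed_field"
  shows "(norm (symmetrize f a b))\<^sup>2 \<le> ((norm (f a b))\<^sup>2 + (norm (f b a))\<^sup>2) / 2"
proof -
  have "norm (symmetrize f a b) \<le> (norm (f a b) + norm (f b a)) / 2"
    using norm_triangle_ineq[of "f a b" "f b a"] by (simp add: symmetrize_def norm_divide)
  then have "(norm (symmetrize f a b))\<^sup>2 \<le> ((norm (f a b) + norm (f b a)) / 2)\<^sup>2"
    by (rule power_mono) simp
  also have "\<dots> \<le> ((norm (f a b))\<^sup>2 + (norm (f b a))\<^sup>2) / 2"
    using sum_squares_bound[of "norm (f a b)" "norm (f b a)"] by (simp add: power2_eq_square field_simps)
  finally show ?thesis .
qed

lemma sum_dpairs_swap: "(\<Sum>(r, s)\<in>dpairs n. g s r) = (\<Sum>(r, s)\<in>dpairs n. g r s)"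
  by (rule sum.reindex_bij_witness[of _ prod.swap prod.swap]) (auto simp: dpairs_def)

lemma sum_dpairs_norm_symmetrize_le:
  fixes f :: "nat \<Rightarrow> nat \<Rightarrow> 'c::real_normed_field"
  shows "(\<Sum>(r, s)\<in>dpairs n. (norm (symmetrize f r s))\<^sup>2) \<le> (\<Sum>(r, s)\<in>dpairs n. (norm (f r s))\<^sup>2)"
proof -
  have "(\<Sum>(r, s)\<in>dpairs n. (norm (symmetrize f r s))\<^sup>2)
      \<le> (\<Sum>(r, s)\<in>dpairs n. ((norm (f r s))\<^sup>2 + (norm (f s r))\<^sup>2) / 2)"
    by (rule sum_mono) (simp only: case_prod_beta norm_symmetrize_sq_le)
  also have "\<dots> = (\<Sum>(r, s)\<in>dpairs n. (norm (f r s))\<^sup>2)"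
    using sum_dpairs_swap[of "\<lambda>r s. (norm (f r s))\<^sup>2" n]
    by (simp add: case_prod_beta sum.distrib flip: sum_divide_distrib)
  finally show ?thesis .
qed

lemma norm_gnhaf_le:
  fixes Z :: "nat \<Rightarrow> nat \<Rightarrow> nat \<Rightarrow> complex"
  assumes "2*k \<le> n"
  shows "norm (gnhaf k n Z) \<le> (\<Prod>l=1..k. sqrt (1 / (real n * (real n - 1)) *
           (\<Sum>(r, s)\<in>dpairs n. (norm (symmetrize (Z l) r s))\<^sup>2)))"
proof -
  define G where "G l x y = norm (symmetrize (Z l) x y)" for l x y
  have "norm (gnhaf k n Z) = norm (inj_mean {1..2*k} {1..n} (\<lambda>r. \<Prod>l=1..k. symmetrize (Z l) (r (2*l-1)) (r (2*l))))"
    using assms by (simp add: gnhaf_eq_inj_mean_symmetrize)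
  also have "\<dots> \<le> inj_mean (\<Union>l\<in>{1..k}. {2*l-1, 2*l}) {1..n} (\<lambda>r. \<Prod>l\<in>{1..k}. G l (r (2*l-1)) (r (2*l)))"
    unfolding UN_pair_blocks G_def prod_norm by (rule norm_inj_mean_le)
  also have "\<dots> \<le> (\<Prod>l\<in>{1..k}. sqrt (inj_mean {2*l-1, 2*l} {1..n} (\<lambda>r. (G l (r (2*l-1)) (r (2*l)))\<^sup>2)))"
    by (intro inj_mean_prod_le_prod_sqrt block_factors_pair_blocks) (auto simp: G_def)
  also have "\<dots> = (\<Prod>l=1..k. sqrt (1 / (real n * (real n - 1)) * (\<Sum>(r, s)\<in>dpairs n. (G l r s)\<^sup>2)))"
  proof (rule prod.cong[OF refl])
    fix l :: nat assume "l \<in> {1..k}"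
    then have "2*l-1 \<noteq> 2*l" by auto
    from inj_mean_pair[OF this, of n "\<lambda>x y. (G l x y)\<^sup>2"]
    show "sqrt (inj_mean {2*l-1, 2*l} {1..n} (\<lambda>r. (G l (r (2*l-1)) (r (2*l)))\<^sup>2))
        = sqrt (1 / (real n * (real n - 1)) * (\<Sum>(r, s)\<in>dpairs n. (G l r s)\<^sup>2))"
      by simp
  qed
  finally show ?thesis
    by (simp add: G_def)
qed

lemma prod_sqrt_sum_norm_symmetrize_le:
  fixes Z :: "'i \<Rightarrow> nat \<Rightarrow> nat \<Rightarrow> 'c::real_normed_field"
  assumes "0 \<le> c"
  shows "(\<Prod>l\<in>L. sqrt (c * (\<Sum>(r, s)\<in>dpairs n. (norm (symmetrize (Z l) r s))\<^sup>2)))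
    \<le> (\<Prod>l\<in>L. sqrt (c * (\<Sum>(r, s)\<in>dpairs n. (norm (Z l r s))\<^sup>2)))"
  using assms sum_dpairs_norm_symmetrize_le[of "Z _" n]
  by (intro prod_mono conjI real_sqrt_ge_zero mult_nonneg_nonneg sum_nonneg real_sqrt_le_mono
      mult_left_mono) auto

theorem mainTheorem7:
  fixes k n :: nat and Z :: "nat \<Rightarrow> nat \<Rightarrow> nat \<Rightarrow> complex"
  assumes "k \<ge> 1" and "n \<ge> 2" and "k \<le> n div 2"
  shows "norm (gnhaf k n Z)
           \<le> (\<Prod>l=1..k. sqrt (1 / (real n * (real n - 1)) *
                 (\<Sum>(r, s)\<in>dpairs n. (norm ((Z l r s + Z l s r) / 2))\<^sup>2)))
         \<and> (\<Prod>l=1..k. sqrt (1 / (real n * (real n - 1)) *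
                 (\<Sum>(r, s)\<in>dpairs n. (norm ((Z l r s + Z l s r) / 2))\<^sup>2)))
           \<le> (\<Prod>l=1..k. sqrt (1 / (real n * (real n - 1)) *
                 (\<Sum>(r, s)\<in>dpairs n. (norm (Z l r s))\<^sup>2)))"
proof -
  have "2*k \<le> n" and "0 \<le> 1 / (real n * (real n - 1))"
    using assms by auto
  then show ?thesis
    using norm_gnhaf_le prod_sqrt_sum_norm_symmetrize_le unfolding symmetrize_def by blast
qed

end
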